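(* Let $k\ge2$ be even, $\alpha_1,\dots,\alpha_k$ positive integers and $G=C(\alpha_1,\dots,\alpha_k)$. Then all $k$ eigenvalues of the quotient matrix $Q_L$ are simple (pairwise distinct).
   Context: $C(\alpha_1,\dots,\alpha_k)$ is defined recursively by $C(\alpha_1)=\overline{K_{\alpha_1}}$ and $C(\alpha_1,\dots,\alpha_i)=\overline{C(\alpha_1,\dots,\alpha_{i-1})\cup K_{\alpha_i}}$ (disjoint union, then complement). $\pi_i$ is the set of $\alpha_i$ vertices introduced at step $i$; for $k$ even, $\pi_i$ is a clique for $i$ odd, independent for $i$ even, and for $i<j$ vertices of $\pi_i,\pi_j$ are adjacent iff $j$ is even. $L=D-A$ is the Laplacian and $Q_L$ the $k\times k$ matrix with $(Q_L)_{ij}=\sum_{v\in\pi_j}L_{uv}$ for any $u\in\pi_i$. *)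

theory Defs
  imports "Jordan_Normal_Form.Char_Poly"
begin

text \<open>Vertices of C(alpha_1,...,alpha_k): pairs (i,t) with i < k (0-indexed part, i.e. pi_(i+1))
  and t < alpha_(i+1).\<close>
definition cverts :: "nat list \<Rightarrow> (nat \<times> nat) set" where
  "cverts as = {(i,t). i < length as \<and> t < as ! i}"

text \<open>Adjacency of the graph built after m steps of the recursion
  (G_0 = empty graph, G_(m+1) = complement of (G_m disjoint-union K_(alpha_(m+1)))),
  so G_1 = complement of K_(alpha_1) and G_k = C(alpha_1,...,alpha_k).
  Only meaningful on vertices (i,t) with i < m, t < as!i.\<close>
fun cadj :: "nat list \<Rightarrow> nat \<Rightarrow> nat \<times> nat \<Rightarrow> nat \<times> nat \<Rightarrow> bool" where
  "cadj as 0 u v = False"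
| "cadj as (Suc m) u v =
     (u \<noteq> v \<and> \<not> (if fst u < m \<and> fst v < m then cadj as m u v
                    else (fst u = m \<and> fst v = m)))"

definition Cadj :: "nat list \<Rightarrow> nat \<times> nat \<Rightarrow> nat \<times> nat \<Rightarrow> bool" where
  "Cadj as = cadj as (length as)"

definition cdeg :: "nat list \<Rightarrow> nat \<times> nat \<Rightarrow> nat" where
  "cdeg as u = card {v \<in> cverts as. Cadj as u v}"

definition lap :: "nat list \<Rightarrow> nat \<times> nat \<Rightarrow> nat \<times> nat \<Rightarrow> real" where
  "lap as u v = (if u = v then real (cdeg as u) else if Cadj as u v then -1 else 0)"

definition QL :: "nat list \<Rightarrow> real mat" where
  "QL as = mat (length as) (length as)
     (\<lambda>(i,j). \<Sum>t<as ! j. lap as (i,0) (j,t))"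

end

theory Submission
  imports Defs
begin

text \<open>
  Number the cells of C(alpha_1, ..., alpha_k) from 0. For even k, cell i is a clique iff i is
  even, and two distinct cells are completely joined iff the later one has odd index. Hence Q_L
  is the Laplacian of the cell graph with cells weighted by their sizes, and its leading n x n
  block is the same matrix for the first n cells. Appending a cell of even index (isolated from
  all earlier cells) multiplies the characteristic polynomial by x. Appending a cell of odd index
  and weight a (joined to all earlier cells, of total weight S) keeps the eigenvalue 0, shifts
  every other eigenvalue by a and adds the eigenvalue a + S. Alternating the two steps, the
  spectrum is 0 together with distinct positive numbers bounded by the total weight.
\<close>

lemma det_last_col_zero:
  fixes A :: "'a :: comm_ring_1 mat"
  assumes A: "A \<in> carrier_mat (Suc n) (Suc n)" and zero: "\<And>i. i < n \<Longrightarrow> A $$ (i,n) = 0"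
  shows "det A = A $$ (n,n) * det (mat_delete A n n)"
proof -
  have "det A = (\<Sum>i<Suc n. A $$ (i,n) * cofactor A i n)"
    by (rule laplace_expansion_column[OF A]) simp
  also have "\<dots> = A $$ (n,n) * cofactor A n n"
    using zero by simp
  finally show ?thesis
    by (simp add: cofactor_def)
qed

lemma det_bordered_const_row_sums:
  fixes A :: "'a :: comm_ring_1 mat"
  assumes A: "A \<in> carrier_mat (Suc n) (Suc n)"
    and row_sum: "\<And>i. i < n \<Longrightarrow> (\<Sum>k<n. A $$ (i,k)) = s"
    and last_col: "\<And>i. i < n \<Longrightarrow> A $$ (i,n) = c"
  shows "s * det A = (s * A $$ (n,n) - c * (\<Sum>k<n. A $$ (n,k))) * det (mat_delete A n n)"
proof -
  txt \<open>Multiplying by the upper triangular T with last column (-c, ..., -c, s) clears the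
    first n entries of the last column.\<close>
  define T :: "'a mat" where "T = mat (Suc n) (Suc n)
    (\<lambda>(i,j). if j = n then (if i = n then s else - c) else of_bool (i = j))"
  have T: "T \<in> carrier_mat (Suc n) (Suc n)"
    by (simp add: T_def)
  have "det T = (\<Prod>i = 0..<Suc n. T $$ (i,i))"
    by (subst det_upper_triangular[OF _ T]) (auto simp: T_def upper_triangular_def prod_list_diag_prod)
  also have "\<dots> = s"
    by (simp add: T_def)
  finally have det_T: "det T = s" .
  have AT: "(A * T) $$ (i,j) = (\<Sum>k<Suc n. A $$ (i,k) * T $$ (k,j))"
    if "i < Suc n" "j < Suc n" for i j
    using that A T by (simp add: scalar_prod_def lessThan_atLeast0)
  have AT_col: "(A * T) $$ (i,j) = A $$ (i,j)" if "i < Suc n" "j < n" for i j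
  proof -
    have "(A * T) $$ (i,j) = (\<Sum>k<Suc n. if k = j then A $$ (i,k) else 0)"
      unfolding AT[OF that(1) less_SucI[OF that(2)]] using that by (simp add: T_def)
    then show ?thesis
      using that by simp
  qed
  have AT_last: "(A * T) $$ (i,n) = s * A $$ (i,n) - c * (\<Sum>k<n. A $$ (i,k))" if "i < Suc n" for i
    unfolding AT[OF that lessI] using that by (simp add: T_def sum_distrib_left sum_negf algebra_simps)
  have "s * det A = det (A * T)"
    using det_mult[OF A T] det_T by (simp add: mult.commute)
  also have "\<dots> = (A * T) $$ (n,n) * det (mat_delete (A * T) n n)"
    by (rule det_last_col_zero) (use A T AT_last row_sum last_col in \<open>auto simp: mult.commute\<close>)
  also have "mat_delete (A * T) n n = mat_delete A n n"
    using A T AT_col by (intro eq_matI) (auto simp: mat_delete_def simp del: index_mult_mat(1))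
  finally show ?thesis
    by (simp add: AT_last)
qed

lemma poly_char_poly_eq_det:
  fixes A :: "'a :: field mat"
  assumes A: "A \<in> carrier_mat n n"
  shows "poly (char_poly A) x = det (x \<cdot>\<^sub>m 1\<^sub>m n - A)"
proof -
  have "- char_matrix A x = x \<cdot>\<^sub>m 1\<^sub>m n - A"
    using A by (intro eq_matI) (auto simp: char_matrix_def)
  then show ?thesis
    using char_poly_matrix[OF A] by simp
qed

definition linear_factors :: "real list \<Rightarrow> complex poly" where
  "linear_factors R = (\<Prod>r\<leftarrow>R. [:- complex_of_real r, 1:])"

lemma poly_linear_factors: "poly (linear_factors R) x = (\<Prod>r\<leftarrow>R. x - complex_of_real r)"
  by (induction R) (simp_all add: linear_factors_def algebra_simps)

lemma order_linear_factors_le_1: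
  assumes "distinct R"
  shows "order c (linear_factors R) \<le> 1"
proof -
  have "order c (linear_factors R) = (\<Sum>r\<leftarrow>R. if complex_of_real r = c then 1 else 0)"
    unfolding linear_factors_def by (subst order_prod_list) (auto simp: o_def order_linear')
  also have "\<dots> = card (set R \<inter> {r. complex_of_real r = c})"
    using assms by (simp add: sum_list_distinct_conv_sum_set sum.If_cases)
  also have "\<dots> \<le> card {Re c}"
    by (intro card_mono) auto
  finally show ?thesis
    by simp
qed

text \<open>Cell i is the paper's pi_(i+1), so two cells are joined iff the later one has even
  index in the paper.\<close>
definition cell_adj :: "nat \<Rightarrow> nat \<Rightarrow> bool" where
  "cell_adj i j \<longleftrightarrow> i \<noteq> j \<and> odd (max i j)"

definition quot_lap :: "(nat \<Rightarrow> real) \<Rightarrow> nat \<Rightarrow> real mat" where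
  "quot_lap w n = mat n n (\<lambda>(i,j).
     (if i = j then (\<Sum>l<n. if cell_adj i l then w l else 0) else 0) - (if cell_adj i j then w j else 0))"

lemma dim_quot_lap [simp]: "dim_row (quot_lap w n) = n" "dim_col (quot_lap w n) = n"
  by (simp_all add: quot_lap_def)

lemma quot_lap_row_sum: "i < n \<Longrightarrow> (\<Sum>j<n. quot_lap w n $$ (i,j)) = 0"
  by (simp add: quot_lap_def sum_subtractf)

lemma quot_lap_Suc:
  "i < n \<Longrightarrow> j < n \<Longrightarrow>
    quot_lap w (Suc n) $$ (i,j) = quot_lap w n $$ (i,j) + (if i = j \<and> odd n then w n else 0)"
  by (auto simp: quot_lap_def cell_adj_def)

lemma det_quot_lap_isolated:
  fixes x :: complex
  assumes n: "even n"
  shows "det (x \<cdot>\<^sub>m 1\<^sub>m (Suc n) - map_mat of_real (quot_lap w (Suc n)))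
       = x * det (x \<cdot>\<^sub>m 1\<^sub>m n - map_mat of_real (quot_lap w n))"
proof -
  let ?A = "x \<cdot>\<^sub>m 1\<^sub>m (Suc n) - map_mat complex_of_real (quot_lap w (Suc n))"
  have "det ?A = ?A $$ (n,n) * det (mat_delete ?A n n)"
    by (rule det_last_col_zero) (use n in \<open>auto simp: quot_lap_def cell_adj_def\<close>)
  moreover have "?A $$ (n,n) = x"
    using n by (auto simp: quot_lap_def cell_adj_def intro!: sum.neutral)
  moreover have "mat_delete ?A n n = x \<cdot>\<^sub>m 1\<^sub>m n - map_mat complex_of_real (quot_lap w n)"
    using n by (intro eq_matI) (auto simp: mat_delete_def quot_lap_Suc)
  ultimately show ?thesis
    by simp
qed

lemma det_quot_lap_dominating:
  fixes x :: complex and w :: "nat \<Rightarrow> real"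
  assumes n: "odd n"
  defines "a \<equiv> complex_of_real (w n)" and "S \<equiv> complex_of_real (\<Sum>l<n. w l)"
  shows "(x - a) * det (x \<cdot>\<^sub>m 1\<^sub>m (Suc n) - map_mat of_real (quot_lap w (Suc n)))
       = x * (x - a - S) * det ((x - a) \<cdot>\<^sub>m 1\<^sub>m n - map_mat of_real (quot_lap w n))"
proof -
  let ?A = "x \<cdot>\<^sub>m 1\<^sub>m (Suc n) - map_mat complex_of_real (quot_lap w (Suc n))"
  have upper_left:
    "?A $$ (i,k) = ((x - a) \<cdot>\<^sub>m 1\<^sub>m n - map_mat complex_of_real (quot_lap w n)) $$ (i,k)"
    if "i < n" "k < n" for i k
    using that n by (simp add: quot_lap_Suc a_def)
  have row_sum: "(\<Sum>k<n. ?A $$ (i,k)) = x - a" if "i < n" for i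
  proof -
    have "(\<Sum>k<n. ?A $$ (i,k))
        = (\<Sum>k<n. ((x - a) \<cdot>\<^sub>m 1\<^sub>m n - map_mat complex_of_real (quot_lap w n)) $$ (i,k))"
      using that by (intro sum.cong refl upper_left) auto
    also have "\<dots> = (\<Sum>k<n. (if i = k then x - a else 0) - complex_of_real (quot_lap w n $$ (i,k)))"
      using that by (intro sum.cong) auto
    also have "\<dots> = x - a"
      using that quot_lap_row_sum[OF that, of w] by (simp add: sum_subtractf flip: of_real_sum)
    finally show ?thesis .
  qed
  have last_col: "?A $$ (i,n) = a" if "i < n" for i
    using that n by (simp add: quot_lap_def cell_adj_def a_def)
  have corner: "?A $$ (n,n) = x - S"
  proof -
    have "(\<Sum>l<Suc n. if cell_adj n l then w l else 0) = (\<Sum>l<n. w l)"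
      using n by (auto simp: cell_adj_def intro!: sum.cong)
    then show ?thesis
      by (simp add: quot_lap_def S_def cell_adj_def)
  qed
  have last_row: "(\<Sum>k<n. ?A $$ (n,k)) = S"
    using n by (simp add: quot_lap_def cell_adj_def S_def)
  have "(x - a) * det ?A = ((x - a) * ?A $$ (n,n) - a * (\<Sum>k<n. ?A $$ (n,k))) * det (mat_delete ?A n n)"
    by (rule det_bordered_const_row_sums[OF _ row_sum last_col]) (simp add: carrier_matI)
  also have "\<dots> = ((x - a) * (x - S) - a * S) * det (mat_delete ?A n n)"
    unfolding corner last_row ..
  also have "mat_delete ?A n n = (x - a) \<cdot>\<^sub>m 1\<^sub>m n - map_mat complex_of_real (quot_lap w n)"
    by (intro eq_matI) (auto simp: mat_delete_def upper_left simp del: index_minus_mat(1))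
  finally show ?thesis
    by (simp add: algebra_simps)
qed

lemma char_poly_quot_lap_isolated:
  assumes "even n"
  shows "char_poly (map_mat complex_of_real (quot_lap w (Suc n)))
       = [:0, 1:] * char_poly (map_mat complex_of_real (quot_lap w n))"
  unfolding poly_eq_poly_eq_iff[symmetric]
  by (simp add: fun_eq_iff poly_char_poly_eq_det[of _ "Suc n"] poly_char_poly_eq_det[of _ n]
      carrier_matI det_quot_lap_isolated[OF assms])

lemma char_poly_quot_lap_dominating:
  fixes w :: "nat \<Rightarrow> real"
  assumes n: "odd n" and char_n: "char_poly (map_mat complex_of_real (quot_lap w n)) = linear_factors (0 # R)"
  shows "char_poly (map_mat complex_of_real (quot_lap w (Suc n)))
       = linear_factors (0 # (w n + (\<Sum>l<n. w l)) # map (\<lambda>r. r + w n) R)"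
proof -
  let ?a = "complex_of_real (w n)"
  have "[:- ?a, 1:] * char_poly (map_mat complex_of_real (quot_lap w (Suc n)))
      = [:- ?a, 1:] * linear_factors (0 # (w n + (\<Sum>l<n. w l)) # map (\<lambda>r. r + w n) R)"
  proof (rule poly_eq_poly_eq_iff[THEN iffD1, OF ext])
    fix x
    have "(x - ?a) * poly (char_poly (map_mat complex_of_real (quot_lap w (Suc n)))) x
        = x * (x - ?a - complex_of_real (\<Sum>l<n. w l))
          * poly (char_poly (map_mat complex_of_real (quot_lap w n))) (x - ?a)"
      using det_quot_lap_dominating[OF n, of x w]
      by (simp add: poly_char_poly_eq_det[of _ "Suc n"] poly_char_poly_eq_det[of _ n] carrier_matI)
    then show "poly ([:- ?a, 1:] * char_poly (map_mat complex_of_real (quot_lap w (Suc n)))) x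
        = poly ([:- ?a, 1:] * linear_factors (0 # (w n + (\<Sum>l<n. w l)) # map (\<lambda>r. r + w n) R)) x"
      by (simp add: char_n poly_linear_factors o_def algebra_simps)
  qed
  moreover have "[:- ?a, 1:] \<noteq> 0"
    by simp
  ultimately show ?thesis
    using mult_left_cancel by blast
qed

lemma char_poly_quot_lap_0: "char_poly (map_mat complex_of_real (quot_lap w 0)) = 1"
  unfolding poly_eq_poly_eq_iff[symmetric]
  by (simp add: fun_eq_iff poly_char_poly_eq_det[of _ 0] carrier_matI)

lemma char_poly_quot_lap_eq_linear_factors:
  fixes w :: "nat \<Rightarrow> real"
  assumes "\<forall>l<2*m+2. 0 < w l"
  shows "\<exists>R. distinct R \<and> (\<forall>r\<in>set R. 0 < r \<and> r \<le> (\<Sum>l<2*m+2. w l))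
    \<and> char_poly (map_mat complex_of_real (quot_lap w (2*m+2))) = linear_factors (0 # R)"
  using assms
proof (induction m)
  case 0
  have "char_poly (map_mat complex_of_real (quot_lap w 1)) = linear_factors [0]"
    using char_poly_quot_lap_isolated[of 0 w] by (simp add: char_poly_quot_lap_0 linear_factors_def)
  from char_poly_quot_lap_dominating[of 1 w "[]", OF _ this]
  have "char_poly (map_mat complex_of_real (quot_lap w 2)) = linear_factors [0, w 1 + w 0]"
    by (simp add: numeral_2_eq_2)
  moreover have "0 < w 0" "0 < w 1"
    using "0.prems" by auto
  ultimately show ?case
    by (intro exI[of _ "[w 1 + w 0]"]) (simp add: numeral_2_eq_2)
next
  case (Suc m)
  define n where "n = 2*m+2"
  define a where "a = w (Suc n)"
  define S where "S = (\<Sum>l<Suc n. w l)"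
  have pos: "\<forall>l<Suc (Suc n). 0 < w l"
    using Suc.prems by (simp add: n_def)
  obtain R where R: "distinct R" "\<forall>r\<in>set R. 0 < r \<and> r \<le> (\<Sum>l<n. w l)"
    and char_n: "char_poly (map_mat complex_of_real (quot_lap w n)) = linear_factors (0 # R)"
    using Suc.IH Suc.prems by (auto simp: n_def)
  have "char_poly (map_mat complex_of_real (quot_lap w (Suc n))) = linear_factors (0 # 0 # R)"
    using char_poly_quot_lap_isolated[of n w] char_n by (simp add: n_def linear_factors_def)
  from char_poly_quot_lap_dominating[of "Suc n" w "0 # R", OF _ this]
  have char_Suc_Suc: "char_poly (map_mat complex_of_real (quot_lap w (Suc (Suc n))))
      = linear_factors (0 # (a + S) # a # map (\<lambda>r. r + a) R)"
    by (simp add: n_def a_def S_def)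
  have "0 \<le> (\<Sum>l<n. w l)"
    using pos by (intro sum_nonneg) (simp add: less_imp_le)
  then have weights: "0 < a" "0 < w n" "0 \<le> (\<Sum>l<n. w l)"
    using pos by (simp_all add: a_def)
  have "distinct ((a + S) # a # map (\<lambda>r. r + a) R)"
    using R weights by (auto simp: S_def distinct_map inj_on_def)
  moreover have
    "\<forall>r\<in>set ((a + S) # a # map (\<lambda>r. r + a) R). 0 < r \<and> r \<le> (\<Sum>l<Suc (Suc n). w l)"
    using R weights by (fastforce simp: S_def a_def)
  moreover have "2 * Suc m + 2 = Suc (Suc n)"
    by (simp add: n_def)
  ultimately show ?case
    using char_Suc_Suc by metis
qed

lemma cadj_iff:
  "fst u < m \<Longrightarrow> fst v < m \<Longrightarrow> cadj as m u v \<longleftrightarrow>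
     u \<noteq> v \<and> (if fst u = fst v then odd (m - 1 - fst u) else even (m - 1 - max (fst u) (fst v)))"
proof (induction m arbitrary: u v)
  case 0
  then show ?case
    by simp
next
  case (Suc m)
  show ?case
  proof (cases "fst u < m \<and> fst v < m")
    case True
    then have "Suc m - 1 - fst u = Suc (m - 1 - fst u)"
      and "Suc m - 1 - max (fst u) (fst v) = Suc (m - 1 - max (fst u) (fst v))"
      by arith+
    then show ?thesis
      using Suc.IH[of u v] True by auto
  next
    case False
    then have "fst u = m \<or> fst v = m"
      using Suc.prems by auto
    then show ?thesis
      using False Suc.prems by (cases "fst u = fst v") (auto simp: max_def)
  qed
qed

lemma Cadj_iff:
  assumes k: "even (length as)" and u: "fst u < length as" and v: "fst v < length as"
  shows "Cadj as u v \<longleftrightarrow>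
    u \<noteq> v \<and> (if fst u = fst v then even (fst u) else cell_adj (fst u) (fst v))"
proof -
  have parity: "odd (length as - 1 - i) \<longleftrightarrow> even i" "even (length as - 1 - i) \<longleftrightarrow> odd i"
    if "i < length as" for i
    using that k by presburger+
  have max_uv: "max (fst u) (fst v) < length as"
    using u v by simp
  have "Cadj as u v \<longleftrightarrow> u \<noteq> v \<and> (if fst u = fst v then odd (length as - 1 - fst u)
      else even (length as - 1 - max (fst u) (fst v)))"
    unfolding Cadj_def by (rule cadj_iff[OF u v])
  then show ?thesis
    unfolding parity(1)[OF u] parity(2)[OF max_uv] cell_adj_def by auto
qed

lemma cadj_irrefl [simp]: "\<not> cadj as m u u"
  by (cases m) simp_all

lemma card_Cadj_cell:
  assumes "even (length as)" "i < length as" "l < length as"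
  shows "card {t. t < as ! l \<and> Cadj as (i,0) (l,t)}
    = (if l = i then (if even i then as ! i - 1 else 0) else if cell_adj i l then as ! l else 0)"
proof -
  have "{t. t < as ! l \<and> Cadj as (i,0) (l,t)}
      = (if l = i then (if even i then {1..<as ! i} else {}) else if cell_adj i l then {..<as ! l} else {})"
    using assms by (auto simp: Cadj_iff)
  then show ?thesis
    by simp
qed

lemma cdeg_eq_sum_cells: "cdeg as u = (\<Sum>l<length as. card {t. t < as ! l \<and> Cadj as u (l,t)})"
proof -
  have "{v \<in> cverts as. Cadj as u v}
      = Sigma {..<length as} (\<lambda>l. {t. t < as ! l \<and> Cadj as u (l,t)})"
    by (auto simp: cverts_def)
  then show ?thesis
    by (simp add: cdeg_def card_SigmaI)
qed

lemma sum_lap_cell: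
  assumes "0 < as ! i"
  shows "(\<Sum>t<as ! j. lap as (i,0) (j,t))
    = (if j = i then real (cdeg as (i,0)) else 0) - real (card {t. t < as ! j \<and> Cadj as (i,0) (j,t)})"
proof -
  have "(\<Sum>t<as ! j. lap as (i,0) (j,t))
      = (\<Sum>t<as ! j. if (j,t) = (i,0) then real (cdeg as (i,0)) else 0)
        - (\<Sum>t<as ! j. if Cadj as (i,0) (j,t) then 1 else 0)"
    unfolding sum_subtractf[symmetric] by (intro sum.cong refl) (auto simp: lap_def Cadj_def)
  also have "\<dots> = (if j = i then real (cdeg as (i,0)) else 0)
      - real (card {t. t < as ! j \<and> Cadj as (i,0) (j,t)})"
  proof -
    have "{t. t = 0 \<and> t < as ! i} = {0}"
      using assms by auto
    then show ?thesis
      by (simp add: sum.If_cases Int_def lessThan_def)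
  qed
  finally show ?thesis .
qed

lemma QL_eq_quot_lap:
  assumes k: "even (length as)" and pos: "\<forall>a\<in>set as. 0 < a"
  shows "QL as = quot_lap (\<lambda>l. real (as ! l)) (length as)"
proof (rule eq_matI)
  fix i j
  assume "i < dim_row (quot_lap (\<lambda>l. real (as ! l)) (length as))"
    and "j < dim_col (quot_lap (\<lambda>l. real (as ! l)) (length as))"
  then have i: "i < length as" and j: "j < length as"
    by simp_all
  txt \<open>Neighbours of (i,0) inside its own cell count once in the degree and once in the
    diagonal cell sum, so they cancel in the diagonal entry.\<close>
  define nb where "nb l = real (card {t. t < as ! l \<and> Cadj as (i,0) (l,t)})" for l
  have nb_split: "nb l = (if l = i then nb i else 0) + (if cell_adj i l then real (as ! l) else 0)"
    if "l < length as" for l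
    using that by (auto simp: nb_def card_Cadj_cell[OF k i] cell_adj_def)
  have "real (cdeg as (i,0)) = (\<Sum>l<length as. nb l)"
    by (simp add: cdeg_eq_sum_cells nb_def)
  also have "\<dots> = (\<Sum>l<length as.
      (if l = i then nb i else 0) + (if cell_adj i l then real (as ! l) else 0))"
    by (intro sum.cong refl nb_split) simp
  also have "\<dots> = nb i + (\<Sum>l<length as. if cell_adj i l then real (as ! l) else 0)"
    using i by (simp add: sum.distrib)
  finally have deg:
    "real (cdeg as (i,0)) = nb i + (\<Sum>l<length as. if cell_adj i l then real (as ! l) else 0)" .
  have "QL as $$ (i,j) = (if j = i then real (cdeg as (i,0)) else 0) - nb j"
    using i j pos by (simp add: QL_def sum_lap_cell nb_def)
  then show "QL as $$ (i,j) = quot_lap (\<lambda>l. real (as ! l)) (length as) $$ (i,j)"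
    using i j deg nb_split[OF j] by (cases "j = i") (simp_all add: quot_lap_def cell_adj_def)
qed (simp_all add: QL_def)

theorem mainTheorem3:
  fixes as :: "nat list" and k :: nat
  assumes "length as = k" and "k \<ge> 2" and "even k"
    and "\<forall>a \<in> set as. a > 0"
  shows "\<forall>c::complex. order c (char_poly (map_mat complex_of_real (QL as))) \<le> 1"
proof
  fix c :: complex
  define m where "m = k div 2 - 1"
  have k: "k = 2 * m + 2"
    using assms(2,3) unfolding m_def by presburger
  have pos: "\<forall>l<2 * m + 2. 0 < real (as ! l)"
    using assms(1,4) k by simp
  obtain R where R: "distinct R" "\<forall>r\<in>set R. 0 < r"
    and char_R:
      "char_poly (map_mat complex_of_real (quot_lap (\<lambda>l. real (as ! l)) k)) = linear_factors (0 # R)"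
    unfolding k using char_poly_quot_lap_eq_linear_factors[OF pos] by blast
  have "char_poly (map_mat complex_of_real (QL as)) = linear_factors (0 # R)"
    using QL_eq_quot_lap[of as] assms(1,3,4) char_R by simp
  moreover have "distinct (0 # R)"
    using R by auto
  ultimately show "order c (char_poly (map_mat complex_of_real (QL as))) \<le> 1"
    using order_linear_factors_le_1 by metis
qed

end
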